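(* Let $k \ge 2$ and $n \ge 1$ be natural numbers, and let $h_k(x) = x + \left\lfloor \frac{x}{k-1} \right\rfloor + 1$ for non-negative integers $x$, with $h_k^p$ denoting the $p$-th functional iterate of $h_k$ (so $h_k^0(0)=0$). Then there exists $p \in \mathbb{N}$ with $h_k^{p-1}(0) < n(k-1) \le h_k^{p}(0)$, and for this $p$ the last number remaining in the Josephus problem with the numbers $1,2,\dots,n$ in which every $k$-th number is removed is $nk - h_k^{p}(0)$.
   Context: Josephus problem: the numbers $1,2,\dots,n$ are arranged in a circle; starting the count at $1$ and proceeding around the circle, every $k$-th number still present is removed (after a removal, counting resumes with the next remaining number), until exactly one number remains. The claim asks to identify this remaining number. *)

theory Defs
  imports Main
begin

definition hk :: "nat \<Rightarrow> nat \<Rightarrow> nat" where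
  "hk k x = x + x div (k - 1) + 1"

text \<open>The circle is a list whose head is the number at which
  the count starts. One step: count k numbers (the k-th is at position (k-1) mod length),
  remove it, and resume counting at the next remaining number.\<close>
definition josephus_step :: "nat \<Rightarrow> nat list \<Rightarrow> nat list" where
  "josephus_step k xs = tl (rotate ((k - 1) mod length xs) xs)"

function josephus_run :: "nat \<Rightarrow> nat list \<Rightarrow> nat list" where
  "josephus_run k xs =
     (if length xs \<le> 1 then xs else josephus_run k (josephus_step k xs))"
  by auto
termination
  by (relation "measure (\<lambda>(k, xs). length xs)")
     (auto simp: josephus_step_def)

definition josephus :: "nat \<Rightarrow> nat \<Rightarrow> nat" where
  "josephus n k = hd (josephus_run k [1..<n + 1])"

end

theory Submission
  imports Defs
begin

text \<open>Reading the Josephus process backwards gives the classical recurrence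
  J(m+1) = (J(m) + k) mod (m+1) for the 0-based position of the survivor.
  The values n k - 1 - J(n) stay constant while J(n) + k does not wrap around, and
  each wrap-around moves them to the next point of the orbit of 0 under h_k:
  on the block [n (k-1), (n+1)(k-1)) the map h_k is the translation by n + 1,
  which is exactly the period of the reduction mod n + 1.\<close>

text \<open>The index is shifted: \<open>josephus_idx k m\<close> is J(m+1), for a circle of m + 1 numbers.\<close>

fun josephus_idx :: "nat \<Rightarrow> nat \<Rightarrow> nat" where
  "josephus_idx k 0 = 0"
| "josephus_idx k (Suc m) = (josephus_idx k m + k) mod (m + 2)"

lemma josephus_idx_less: "josephus_idx k m < Suc m"
  by (cases m) auto

lemma josephus_run_eq_nth:
  assumes "length xs = Suc m" and "k \<ge> 1"
  shows "josephus_run k xs = [xs ! josephus_idx k m]"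
  using assms(1)
proof (induction m arbitrary: xs)
  case 0
  then obtain a where "xs = [a]" by (cases xs) auto
  then show ?case by (subst josephus_run.simps) simp
next
  case (Suc m)
  define ys where "ys = josephus_step k xs"
  define i where "i = josephus_idx k m"
  have ys: "ys = tl (rotate ((k - 1) mod (m + 2)) xs)" "length ys = Suc m"
    using Suc.prems by (simp_all add: ys_def josephus_step_def)
  have "i < Suc m" unfolding i_def by (rule josephus_idx_less)
  \<comment> \<open>the survivor of the smaller circle sits one place after the removed number\<close>
  then have "ys ! i = xs ! ((i + 1 + (k - 1) mod (m + 2)) mod (m + 2))"
    using Suc.prems by (simp add: ys nth_tl nth_rotate add_ac)
  also have "\<dots> = xs ! ((i + 1 + (k - 1)) mod (m + 2))"
    by (simp only: mod_add_right_eq)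
  finally have "ys ! i = xs ! josephus_idx k (Suc m)"
    using assms(2) by (simp add: i_def add.commute)
  moreover have "josephus_run k xs = josephus_run k ys"
    unfolding ys_def using Suc.prems by (subst josephus_run.simps) simp
  ultimately show ?case using Suc.IH[OF ys(2)] by (simp add: i_def)
qed

lemma josephus_eq_idx:
  assumes "n \<ge> 1" and "k \<ge> 1"
  shows "josephus n k = josephus_idx k (n - 1) + 1"
proof -
  have "josephus n k = [1..<n + 1] ! josephus_idx k (n - 1)"
    using josephus_run_eq_nth[of "[1..<n + 1]" "n - 1" k] assms
    by (simp add: josephus_def)
  moreover have "josephus_idx k (n - 1) < n"
    using assms(1) josephus_idx_less[of k "n - 1"] by simp
  ultimately show ?thesis by (simp del: upt_Suc)
qed

abbreviation hk_orbit :: "nat \<Rightarrow> nat \<Rightarrow> nat" where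
  "hk_orbit k j \<equiv> (hk k ^^ j) 0"

lemma mono_hk: "mono (hk k)"
  by (rule monoI) (simp add: hk_def add_mono div_le_mono)

lemma strict_mono_hk_orbit: "strict_mono (hk_orbit k)"
  unfolding strict_mono_Suc_iff by (simp add: hk_def)

lemma hk_orbit_ge: "j \<le> hk_orbit k j"
  by (induction j) (auto simp: hk_def)

lemma hk_on_block:
  assumes "n * (k - 1) \<le> x" and "x < (n + 1) * (k - 1)"
  shows "hk k x = x + n + 1"
proof -
  have "x div (k - 1) = n"
    using assms by (intro div_nat_eqI) (simp_all add: mult.commute)
  then show ?thesis by (simp add: hk_def)
qed

lemma hk_orbit_bracket_exists:
  assumes "N \<ge> 1"
  shows "\<exists>p. hk_orbit k (p - 1) < N \<and> N \<le> hk_orbit k p"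
proof -
  define p where "p = (LEAST p. N \<le> hk_orbit k p)"
  have reach: "N \<le> hk_orbit k p"
    unfolding p_def by (rule LeastI_ex) (use hk_orbit_ge in blast)
  then have "p \<noteq> 0" using assms by (intro notI) simp
  then have "\<not> N \<le> hk_orbit k (p - 1)"
    unfolding p_def by (intro not_less_Least) (simp_all add: p_def)
  then show ?thesis using reach by (intro exI[of _ p]) simp
qed

lemma hk_orbit_bracket_le:
  assumes "k \<ge> 2" and "hk_orbit k (p - 1) < (m + 1) * (k - 1)"
    and "(m + 1) * (k - 1) \<le> hk_orbit k p"
  shows "hk_orbit k p < (m + 1) * k"
proof -
  obtain c where k: "k = Suc c" "c \<ge> 1" using assms(1) by (cases k) auto
  have "p = Suc (p - 1)" using assms(2,3) by (cases p) auto
  then have "hk_orbit k p = hk k (hk_orbit k (p - 1))"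
    by (metis funpow.simps(2) o_apply)
  also have "\<dots> \<le> hk k ((m + 1) * c - 1)"
    using assms(2) k by (intro monoD[OF mono_hk]) simp
  also have "\<dots> = (m + 1) * c - 1 + m + 1"
    using k by (intro hk_on_block) simp_all
  also have "\<dots> < (m + 1) * k"
    using k by simp
  finally show ?thesis .
qed

lemma hk_orbit_within_block:
  assumes "n * (k - 1) \<le> hk_orbit k q"
    and "hk_orbit k (q + d - 1) < (n + 1) * (k - 1)"
  shows "hk_orbit k (q + d) = hk_orbit k q + d * (n + 1)"
  using assms(2)
proof (induction d)
  case 0
  then show ?case by simp
next
  case (Suc d)
  have "hk_orbit k (q + d - 1) \<le> hk_orbit k (q + d)"
    using strict_mono_less_eq[OF strict_mono_hk_orbit] by simp
  with Suc have IH: "hk_orbit k (q + d) = hk_orbit k q + d * (n + 1)"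
    by simp
  have "hk k (hk_orbit k (q + d)) = hk_orbit k (q + d) + n + 1"
    using assms(1) Suc.prems by (intro hk_on_block) (simp_all add: IH)
  then show ?case using IH by simp
qed

lemma josephus_idx_hk_orbit:
  assumes "k \<ge> 2" and "hk_orbit k (p - 1) < (m + 1) * (k - 1)"
    and "(m + 1) * (k - 1) \<le> hk_orbit k p"
  shows "josephus_idx k m + 1 + hk_orbit k p = (m + 1) * k"
  using assms(2,3)
proof (induction m arbitrary: p)
  case 0
  then show ?case using hk_orbit_bracket_le[OF assms(1), of p 0] by simp
next
  case (Suc m)
  have "(m + 1) * (k - 1) \<ge> 1" using assms(1) by simp
  then obtain q where q: "hk_orbit k (q - 1) < (m + 1) * (k - 1)"
      "(m + 1) * (k - 1) \<le> hk_orbit k q"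
    using hk_orbit_bracket_exists by blast
  have IH: "josephus_idx k m + 1 + hk_orbit k q = (m + 1) * k"
    using Suc.IH[OF q] .
  have "q \<le> p"
  proof (rule ccontr)
    assume "\<not> q \<le> p"
    then have "hk_orbit k p \<le> hk_orbit k (q - 1)"
      using strict_mono_less_eq[OF strict_mono_hk_orbit] by simp
    moreover have "(m + 1) * (k - 1) \<le> (Suc m + 1) * (k - 1)" by simp
    ultimately show False using q(1) Suc.prems(2) by linarith
  qed
  then obtain d where p: "p = q + d" using le_Suc_ex by blast
  have step: "hk_orbit k p = hk_orbit k q + d * (m + 2)"
    using hk_orbit_within_block[OF q(2), of d] Suc.prems(1) by (simp add: p)
  obtain x where "(m + 2) * k = Suc (hk_orbit k p + x)"
    using hk_orbit_bracket_le[OF assms(1) Suc.prems] less_imp_Suc_add by fastforce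
  then have x: "x + 1 + hk_orbit k p = (m + 2) * k" by simp
  obtain c where k: "k = Suc c" using assms(1) by (cases k) auto
  have "x < m + 2"
    using x Suc.prems(2) by (simp add: k algebra_simps)
  moreover have "x + d * (m + 2) = josephus_idx k m + k"
    using x step IH by (simp add: algebra_simps)
  ultimately have "josephus_idx k (Suc m) = x"
    by (metis josephus_idx.simps(2) mod_less mod_mult_self1)
  then show ?case using x by simp
qed

theorem theorem3:
  fixes k n :: nat
  assumes "k \<ge> 2" and "n \<ge> 1"
  shows "(\<exists>p. ((hk k) ^^ (p - 1)) 0 < n * (k - 1) \<and> n * (k - 1) \<le> ((hk k) ^^ p) 0)
       \<and> (\<forall>p. ((hk k) ^^ (p - 1)) 0 < n * (k - 1) \<and> n * (k - 1) \<le> ((hk k) ^^ p) 0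
              \<longrightarrow> int (josephus n k) = int (n * k) - int (((hk k) ^^ p) 0))"
proof (intro conjI allI impI)
  show "\<exists>p. hk_orbit k (p - 1) < n * (k - 1) \<and> n * (k - 1) \<le> hk_orbit k p"
    using assms by (intro hk_orbit_bracket_exists) simp
  fix p assume "hk_orbit k (p - 1) < n * (k - 1) \<and> n * (k - 1) \<le> hk_orbit k p"
  then have "josephus_idx k (n - 1) + 1 + hk_orbit k p = n * k"
    using josephus_idx_hk_orbit[OF assms(1), of p "n - 1"] assms(2) by simp
  moreover have "josephus n k = josephus_idx k (n - 1) + 1"
    using josephus_eq_idx assms by simp
  ultimately show "int (josephus n k) = int (n * k) - int (hk_orbit k p)"
    by linarith
qed

end
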